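(* Let $l,d\ge1$ be integers and let $f:\mathbb{R}^l\to\mathbb{R}$ be a polynomial of degree at most $d$, $f(x)=\sum_{|S|\le d}c_S\chi_S(x)$, where $S$ ranges over multisets of elements of $[l]$ of size at most $d$ and $\chi_S(x)=\prod_{i\in S}x_i$. Let $\mathcal{G}\sim N(0,1)^l$ be a standard Gaussian vector. Then for every multiset $T\subseteq[l]$ with $|T|\le d$, $$\|f(\mathcal{G})\|_2\ \ge\ d^{-d}\cdot |c_T|\Big/\binom{l+d}{d},$$ where $\|f(\mathcal{G})\|_2=\mathbb{E}[f(\mathcal{G})^2]^{1/2}$. *)

theory Defs
  imports "HOL-Probability.Probability" "HOL-Library.Multiset"
begin

definition mono_idx :: "nat \<Rightarrow> nat \<Rightarrow> nat multiset set" where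
  "mono_idx l d = {S. set_mset S \<subseteq> {..<l} \<and> size S \<le> d}"

definition chi :: "nat multiset \<Rightarrow> (nat \<Rightarrow> real) \<Rightarrow> real" where
  "chi S x = prod_mset (image_mset x S)"

definition poly_f :: "nat \<Rightarrow> nat \<Rightarrow> (nat multiset \<Rightarrow> real) \<Rightarrow> (nat \<Rightarrow> real) \<Rightarrow> real" where
  "poly_f l d c x = (\<Sum>S\<in>mono_idx l d. c S * chi S x)"

definition gauss :: "nat \<Rightarrow> (nat \<Rightarrow> real) measure" where
  "gauss l = PiM {..<l} (\<lambda>_. density lborel std_normal_density)"

definition L2norm :: "'a measure \<Rightarrow> ('a \<Rightarrow> real) \<Rightarrow> real" where
  "L2norm M X = sqrt (\<integral>x. (X x)\<^sup>2 \<partial>M)"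

end

theory Submission
  imports Defs "HOL-Computational_Algebra.Polynomial"
begin

text \<open>
  Write <g, h> for E[g(G) h(G)]. Gaussian integration by parts gives
  E[p(G) He_j(G)] = E[p^(j)(G)] for the Hermite polynomials He_j, so they are orthogonal with
  <He_j, He_j> = j!, and expanding x^s in the Hermite basis yields
  sum_j <x^s, He_j> coeff(He_j, t) / j! = [s = t]. Multiplying over the coordinates, the polynomial
  q = sum_e (prod_i coeff(He_(e_i), T_i) / e_i!) prod_i He_(e_i)(x_i), with e ranging over the
  exponent vectors of degree at most d, satisfies <chi_S, q> = [S = T] for every monomial chi_S,
  hence <f, q> = c_T. Orthogonality and coeff(He_j, t)^2 <= 2^j j! bound <q, q> by 2^d times the
  number of monomials, which is at most binom(l + d, d). Cauchy-Schwarz now gives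
  c_T^2 <= <f, f> 2^d binom(l + d, d) <= <f, f> (d^d binom(l + d, d))^2.
\<close>

section \<open>Gaussian expectation of polynomials\<close>

abbreviation std_normal :: "real measure" where
  "std_normal \<equiv> density lborel std_normal_density"

definition std_normal_moment :: "nat \<Rightarrow> real" where
  "std_normal_moment k = (if even k then fact k / (2 ^ (k div 2) * fact (k div 2)) else 0)"

lemma integrable_std_normal_power: "integrable std_normal (\<lambda>x. x ^ k)"
  by (subst integrable_density) (auto simp: integrable_std_normal_moment)

lemma integral_std_normal_power: "(\<integral>x. x ^ k \<partial>std_normal) = std_normal_moment k"
proof -
  have "(\<integral>x. x ^ k \<partial>std_normal) = (\<integral>x. std_normal_density x * x ^ k \<partial>lborel)"
    by (subst integral_density) auto
  also have "\<dots> = std_normal_moment k"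
  proof (cases "even k")
    case True
    then obtain n where "k = 2 * n" by auto
    then show ?thesis
      using integral_std_normal_moment_even[of n] by (simp add: std_normal_moment_def)
  next
    case False
    then obtain n where "k = 2 * n + 1" using oddE by blast
    then show ?thesis
      using integral_std_normal_moment_odd[of n] by (simp add: std_normal_moment_def)
  qed
  finally show ?thesis .
qed

lemma std_normal_moment_1 [simp]: "std_normal_moment (Suc 0) = 0"
  by (simp add: std_normal_moment_def)

lemma std_normal_moment_Suc_Suc:
  "std_normal_moment (Suc (Suc k)) = real (Suc k) * std_normal_moment k"
proof (cases "even k")
  case True
  then obtain n where n: "k = 2 * n" by auto
  have fact_2_Suc: "fact (2 * Suc n) = (2 * real (Suc n)) * (real (Suc (2 * n)) * fact (2 * n))"
    by (simp add: fact_Suc algebra_simps)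
  have "std_normal_moment (Suc (Suc k)) = fact (2 * Suc n) / (2 ^ Suc n * fact (Suc n))"
    using n by (simp add: std_normal_moment_def)
  also have "\<dots> = (2 * real (Suc n)) * (real (Suc (2 * n)) * fact (2 * n))
                    / ((2 * real (Suc n)) * (2 ^ n * fact n))"
    unfolding fact_2_Suc fact_Suc power_Suc by (simp only: mult_ac of_nat_mult)
  also have "\<dots> = real (Suc (2 * n)) * fact (2 * n) / (2 ^ n * fact n)"
    by (rule nonzero_mult_divide_mult_cancel_left) simp
  also have "\<dots> = real (Suc k) * std_normal_moment k"
    using n by (simp add: std_normal_moment_def)
  finally show ?thesis .
next
  case False
  then show ?thesis by (simp add: std_normal_moment_def)
qed

definition gauss_expect :: "real poly \<Rightarrow> real" where
  "gauss_expect p = (\<integral>x. poly p x \<partial>std_normal)"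

lemma integrable_std_normal_poly: "integrable std_normal (poly p)"
  unfolding poly_altdef using integrable_std_normal_power by auto

lemma gauss_expect_add: "gauss_expect (p + q) = gauss_expect p + gauss_expect q"
  by (simp add: gauss_expect_def integrable_std_normal_poly)

lemma gauss_expect_diff: "gauss_expect (p - q) = gauss_expect p - gauss_expect q"
  by (simp add: gauss_expect_def integrable_std_normal_poly)

lemma gauss_expect_smult: "gauss_expect (smult a p) = a * gauss_expect p"
  by (simp add: gauss_expect_def)

lemma gauss_expect_sum: "gauss_expect (\<Sum>i\<in>A. p i) = (\<Sum>i\<in>A. gauss_expect (p i))"
  by (simp add: gauss_expect_def poly_sum integrable_std_normal_poly)

lemma gauss_expect_monom: "gauss_expect (monom a k) = a * std_normal_moment k"
  by (simp add: gauss_expect_def poly_monom integral_std_normal_power)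

lemma gauss_expect_0 [simp]: "gauss_expect 0 = 0"
  by (simp add: gauss_expect_def)

lemma gauss_expect_const [simp]: "gauss_expect [:a:] = a"
  using gauss_expect_monom[of a 0] by (simp add: monom_0 std_normal_moment_def)

text \<open>Stein's identity E[G p(G)] = E[p'(G)], checked on monomials via the moment recursion.\<close>

lemma gauss_expect_pCons_0: "gauss_expect (pCons 0 p) = gauss_expect (pderiv p)"
proof -
  let ?n = "degree p"
  have "pCons 0 p = [:0, 1:] * (\<Sum>i\<le>?n. monom (coeff p i) i)"
    by (simp add: poly_as_sum_of_monoms)
  then have "gauss_expect (pCons 0 p) = (\<Sum>i\<le>?n. coeff p i * std_normal_moment (Suc i))"
    by (simp add: sum_distrib_left monom_Suc[symmetric] gauss_expect_sum gauss_expect_monom)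
  also have "\<dots> = (\<Sum>i\<le>?n. of_nat i * coeff p i * std_normal_moment (i - 1))"
    by (intro sum.cong refl, rename_tac i, case_tac i) (simp_all add: std_normal_moment_Suc_Suc)
  also have "\<dots> = gauss_expect (pderiv p)"
    by (subst (2) poly_as_sum_of_monoms[symmetric])
       (simp add: pderiv_monom higher_pderiv_sum[of 1, simplified] gauss_expect_sum
         gauss_expect_monom)
  finally show ?thesis .
qed

section \<open>Hermite polynomials\<close>

fun hermite :: "nat \<Rightarrow> real poly" where
  "hermite 0 = 1"
| "hermite (Suc 0) = [:0, 1:]"
| "hermite (Suc (Suc n)) = pCons 0 (hermite (Suc n)) - smult (real (Suc n)) (hermite n)"

declare hermite.simps(3) [simp del]

lemma pderiv_hermite: "pderiv (hermite (Suc n)) = smult (real (Suc n)) (hermite n)"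
proof (induction n rule: hermite.induct)
  case (3 n)
  have "pderiv (hermite (Suc (Suc (Suc n))))
      = hermite (Suc (Suc n)) + pCons 0 (smult (real (Suc (Suc n))) (hermite (Suc n)))
        - smult (real (Suc (Suc n))) (smult (real (Suc n)) (hermite n))"
    by (simp only: hermite.simps(3)[of "Suc n"] pderiv_diff pderiv_smult pderiv_pCons 3
        add_diff_eq)
  also have "\<dots> = hermite (Suc (Suc n)) + smult (real (Suc (Suc n))) (hermite (Suc (Suc n)))"
    by (simp add: smult_diff_right hermite.simps(3))
  finally show ?case
    unfolding of_nat_Suc[of "Suc (Suc n)"] smult_add_left smult_1_left .
qed (simp_all add: pderiv_pCons hermite.simps(3) pderiv_diff)

lemma degree_hermite [simp]: "degree (hermite n) = n"
  and coeff_hermite_self [simp]: "coeff (hermite n) n = 1"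
proof (induction n rule: hermite.induct)
  case (3 n)
  show coeff: "coeff (hermite (Suc (Suc n))) (Suc (Suc n)) = 1"
    using 3 by (simp add: hermite.simps(3) coeff_eq_0)
  have "degree (hermite (Suc (Suc n))) \<le> Suc (Suc n)"
    using 3 by (simp add: hermite.simps(3) degree_diff_le)
  moreover have "Suc (Suc n) \<le> degree (hermite (Suc (Suc n)))"
    using coeff by (intro le_degree) simp
  ultimately show "degree (hermite (Suc (Suc n))) = Suc (Suc n)"
    by simp
qed simp_all

lemma gauss_expect_mult_hermite_Suc:
  "gauss_expect (p * hermite (Suc j)) = gauss_expect (pderiv p * hermite j)"
proof (cases j)
  case 0
  then show ?thesis by (simp add: gauss_expect_pCons_0)
next
  case (Suc k)
  have "gauss_expect (p * hermite (Suc j))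
      = gauss_expect (pderiv (p * hermite (Suc k))) - real (Suc k) * gauss_expect (p * hermite k)"
    by (simp add: Suc hermite.simps(3) gauss_expect_diff gauss_expect_smult gauss_expect_pCons_0
        right_diff_distrib)
  also have "pderiv (p * hermite (Suc k))
      = pderiv p * hermite (Suc k) + smult (real (Suc k)) (p * hermite k)"
    by (simp add: pderiv_mult pderiv_hermite)
  finally show ?thesis by (simp add: Suc gauss_expect_add gauss_expect_smult)
qed

lemma gauss_expect_mult_hermite: "gauss_expect (p * hermite j) = gauss_expect ((pderiv ^^ j) p)"
  by (induction j arbitrary: p)
     (simp_all add: gauss_expect_mult_hermite_Suc funpow_Suc_right del: funpow.simps)

lemma higher_pderiv_eq_0:
  fixes p :: "'a::{comm_semiring_1,semiring_no_zero_divisors,semiring_char_0} poly"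
  assumes "degree p < n"
  shows "(pderiv ^^ n) p = 0"
  by (rule poly_eqI) (use assms in \<open>simp add: coeff_higher_pderiv coeff_eq_0\<close>)

lemma gauss_expect_mult_hermite_eq_0: "degree p < j \<Longrightarrow> gauss_expect (p * hermite j) = 0"
  by (simp add: gauss_expect_mult_hermite higher_pderiv_eq_0)

lemma higher_pderiv_hermite_self: "(pderiv ^^ n) (hermite n) = [:fact n:]"
proof -
  have "degree ((pderiv ^^ n) (hermite n)) = 0"
    by (simp add: degree_higher_pderiv)
  moreover have "coeff ((pderiv ^^ n) (hermite n)) 0 = fact n"
    by (simp add: coeff_higher_pderiv pochhammer_fact)
  ultimately show ?thesis
    by (metis degree_0_id)
qed

lemma gauss_expect_hermite_mult_hermite:
  "gauss_expect (hermite i * hermite j) = (if i = j then fact j else 0)"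
proof (cases i j rule: linorder_cases)
  case less
  then show ?thesis by (simp add: gauss_expect_mult_hermite_eq_0)
next
  case equal
  then show ?thesis by (simp add: gauss_expect_mult_hermite higher_pderiv_hermite_self)
next
  case greater
  then show ?thesis by (simp add: mult.commute[of "hermite i"] gauss_expect_mult_hermite_eq_0)
qed

lemma hermite_expansion:
  assumes "degree p \<le> n"
  shows "p = (\<Sum>j\<le>n. smult (gauss_expect (p * hermite j) / fact j) (hermite j))"
  using assms
proof (induction n arbitrary: p)
  case 0
  then obtain a where "p = [:a:]" by (metis degree_0_id le_zero_eq)
  then show ?case by simp
next
  case (Suc n)
  define a where "a = coeff p (Suc n)"
  define r where "r = p - smult a (hermite (Suc n))"
  have "degree r \<le> Suc n"
    using Suc.prems by (simp add: r_def degree_diff_le)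
  moreover have "coeff r (Suc n) = 0"
    by (simp add: r_def a_def)
  ultimately have "degree r \<le> n"
    by (metis leading_coeff_0_iff degree_0 zero_le le_Suc_eq)
  have coeff_r: "gauss_expect (r * hermite j)
      = gauss_expect (p * hermite j) - (if j = Suc n then a * fact j else 0)" for j
    by (simp add: r_def left_diff_distrib gauss_expect_diff gauss_expect_smult
        gauss_expect_hermite_mult_hermite)
  have "gauss_expect (p * hermite (Suc n)) / fact (Suc n) = a"
    using coeff_r[of "Suc n"] \<open>degree r \<le> n\<close> by (simp add: gauss_expect_mult_hermite_eq_0)
  moreover have "r = (\<Sum>j\<le>n. smult (gauss_expect (p * hermite j) / fact j) (hermite j))"
    using Suc.IH[OF \<open>degree r \<le> n\<close>] coeff_r by simp
  ultimately show ?case by (simp add: r_def)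
qed

lemma hermite_coeff_duality:
  "(\<Sum>j\<le>s. gauss_expect (monom 1 s * hermite j) / fact j * coeff (hermite j) t)
     = (if s = t then 1 else 0)"
proof -
  have "monom 1 s = (\<Sum>j\<le>s. smult (gauss_expect (monom 1 s * hermite j) / fact j) (hermite j))"
    by (rule hermite_expansion) (simp add: degree_monom_eq)
  then have "coeff (monom 1 s) t
      = coeff (\<Sum>j\<le>s. smult (gauss_expect (monom 1 s * hermite j) / fact j) (hermite j)) t"
    by (rule arg_cong)
  then show ?thesis
    by (simp add: coeff_sum coeff_monom)
qed

lemma hermite_coeff_sq_le: "(coeff (hermite j) t)\<^sup>2 \<le> 2 ^ j * fact j"
proof (induction j arbitrary: t rule: hermite.induct)
  case 1
  then show ?case by (simp add: coeff_1)
next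
  case 2
  then show ?case by (cases t) (auto simp: coeff_pCons split: nat.splits)
next
  case (3 n)
  define a where "a = coeff (pCons 0 (hermite (Suc n))) t"
  define b where "b = coeff (hermite n) t"
  define c :: real where "c = real (Suc n)"
  define F :: real where "F = 2 ^ n * fact n"
  have a_bound: "a\<^sup>2 \<le> 2 * c * F"
  proof (cases t)
    case (Suc t')
    have "a\<^sup>2 \<le> 2 ^ Suc n * fact (Suc n)"
      using "3.IH"(1)[of t'] by (simp add: a_def Suc)
    then show ?thesis by (simp add: c_def F_def algebra_simps)
  qed (simp add: a_def c_def F_def)
  have b_bound: "b\<^sup>2 \<le> F"
    using "3.IH"(2) by (simp add: b_def F_def)
  have "F \<ge> 0" "c \<ge> 0"
    by (simp_all add: F_def c_def)
  have "(coeff (hermite (Suc (Suc n))) t)\<^sup>2 = (a - c * b)\<^sup>2"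
    by (simp add: hermite.simps(3) a_def b_def c_def)
  also have "\<dots> \<le> 2 * a\<^sup>2 + 2 * c\<^sup>2 * b\<^sup>2"
    using zero_le_power2[of "a + c * b"] by (simp add: power2_eq_square algebra_simps)
  also have "\<dots> \<le> 2 * (2 * c * F) + 2 * c\<^sup>2 * F"
    using a_bound b_bound by (intro add_mono mult_left_mono) simp_all
  also have "\<dots> \<le> 2 * c * F * (2 * (c + 1))"
    using \<open>F \<ge> 0\<close> \<open>c \<ge> 0\<close> by (simp add: power2_eq_square algebra_simps)
  also have "\<dots> = 2 ^ Suc (Suc n) * fact (Suc (Suc n))"
    by (simp add: c_def F_def algebra_simps)
  finally show ?case .
qed

section \<open>Products of independent Gaussians\<close>

lemma prob_space_std_normal: "prob_space std_normal"
  using prob_space_normal_density[of 1 0] by simp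

lemma
  shows integrable_gauss_prod_poly: "integrable (gauss l) (\<lambda>x. \<Prod>i<l. poly (P i) (x i))"
    and integral_gauss_prod_poly:
      "(\<integral>x. (\<Prod>i<l. poly (P i) (x i)) \<partial>gauss l) = (\<Prod>i<l. gauss_expect (P i))"
proof -
  interpret product_sigma_finite "\<lambda>_::nat. std_normal"
    unfolding product_sigma_finite_def
    using prob_space_std_normal prob_space_imp_sigma_finite by blast
  show "integrable (gauss l) (\<lambda>x. \<Prod>i<l. poly (P i) (x i))"
    unfolding gauss_def
    by (rule product_integrable_prod) (auto simp: integrable_std_normal_poly)
  show "(\<integral>x. (\<Prod>i<l. poly (P i) (x i)) \<partial>gauss l) = (\<Prod>i<l. gauss_expect (P i))"
    unfolding gauss_def
    by (subst product_integral_prod) (auto simp: integrable_std_normal_poly gauss_expect_def)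
qed

definition tensor_poly ::
    "nat \<Rightarrow> 'a set \<Rightarrow> ('a \<Rightarrow> real) \<Rightarrow> ('a \<Rightarrow> nat \<Rightarrow> real poly) \<Rightarrow> (nat \<Rightarrow> real) \<Rightarrow> real" where
  "tensor_poly l A a P x = (\<Sum>\<alpha>\<in>A. a \<alpha> * (\<Prod>i<l. poly (P \<alpha> i) (x i)))"

lemma tensor_poly_mult:
  "tensor_poly l A a P x * tensor_poly l B b Q x
     = (\<Sum>\<alpha>\<in>A. \<Sum>\<beta>\<in>B. a \<alpha> * b \<beta> * (\<Prod>i<l. poly (P \<alpha> i * Q \<beta> i) (x i)))"
  by (simp add: tensor_poly_def sum_product prod.distrib mult_ac)

lemma integrable_gauss_tensor_poly_mult:
  "integrable (gauss l) (\<lambda>x. tensor_poly l A a P x * tensor_poly l B b Q x)"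
  unfolding tensor_poly_mult
  by (simp add: integrable_gauss_prod_poly del: poly_mult)

lemma integral_gauss_tensor_poly_mult:
  "(\<integral>x. tensor_poly l A a P x * tensor_poly l B b Q x \<partial>gauss l)
     = (\<Sum>\<alpha>\<in>A. \<Sum>\<beta>\<in>B. a \<alpha> * b \<beta> * (\<Prod>i<l. gauss_expect (P \<alpha> i * Q \<beta> i)))"
  unfolding tensor_poly_mult
  by (simp add: integrable_gauss_prod_poly integral_gauss_prod_poly del: poly_mult)

lemma quadratic_nonneg_imp_discriminant_le:
  fixes a b c :: real
  assumes "c \<ge> 0" and nonneg: "\<And>t. 0 \<le> a - 2 * t * b + t\<^sup>2 * c"
  shows "b\<^sup>2 \<le> a * c"
proof (cases "c = 0")
  case True
  have "b = 0"
  proof (rule ccontr)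
    assume "b \<noteq> 0"
    then show False
      using nonneg[of "(a + 1) / (2 * b)"] True by (simp add: field_simps)
  qed
  then show ?thesis using True by simp
next
  case False
  then show ?thesis
    using nonneg[of "b / c"] \<open>c \<ge> 0\<close> by (simp add: field_simps power2_eq_square)
qed

lemma integral_mult_square_le:
  fixes f g :: "'a \<Rightarrow> real"
  assumes "integrable M (\<lambda>x. f x * f x)" "integrable M (\<lambda>x. g x * g x)"
    and "integrable M (\<lambda>x. f x * g x)"
  shows "(\<integral>x. f x * g x \<partial>M)\<^sup>2 \<le> (\<integral>x. f x * f x \<partial>M) * (\<integral>x. g x * g x \<partial>M)"
proof (rule quadratic_nonneg_imp_discriminant_le)
  show "0 \<le> (\<integral>x. g x * g x \<partial>M)"
    by (rule integral_nonneg_AE) simp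
  fix t
  have "0 \<le> (\<integral>x. (f x - t * g x)\<^sup>2 \<partial>M)"
    by (rule integral_nonneg_AE) simp
  also have "(\<lambda>x. (f x - t * g x)\<^sup>2) = (\<lambda>x. f x * f x - 2 * t * (f x * g x) + t\<^sup>2 * (g x * g x))"
    by (simp add: power2_eq_square algebra_simps)
  finally show "0 \<le> (\<integral>x. f x * f x \<partial>M) - 2 * t * (\<integral>x. f x * g x \<partial>M) + t\<^sup>2 * (\<integral>x. g x * g x \<partial>M)"
    using assms by simp
qed

section \<open>Counting monomials\<close>

lemma chi_eq_prod_power:
  assumes "set_mset S \<subseteq> {..<l}"
  shows "chi S x = (\<Prod>i<l. x i ^ count S i)"
proof -
  have "chi S x = (\<Prod>i\<in>set_mset S. x i ^ count S i)"
    by (simp add: chi_def image_prod_mset_multiplicity)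
  also have "\<dots> = (\<Prod>i<l. x i ^ count S i)"
    using assms by (intro prod.mono_neutral_left) (auto simp: not_in_iff)
  finally show ?thesis .
qed

lemma size_eq_sum_count:
  fixes S :: "nat multiset"
  assumes "set_mset S \<subseteq> {..<l}"
  shows "size S = (\<Sum>i<l. count S i)"
proof -
  have "size S = (\<Sum>i\<in>set_mset S. count S i)"
    by (simp add: size_multiset_overloaded_eq)
  also have "\<dots> = (\<Sum>i<l. count S i)"
    using assms by (intro sum.mono_neutral_left) (auto simp: not_in_iff)
  finally show ?thesis .
qed

lemma finite_mono_idx: "finite (mono_idx l d)"
proof -
  have "mono_idx l d = (\<Union>n\<le>d. multisets_of_size {..<l} n)"
    by (auto simp: mono_idx_def multisets_of_size_def)
  then show ?thesis
    by (auto intro: finite_multisets_of_size)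
qed

lemma card_mono_idx_le: "card (mono_idx l d) \<le> (l + d) choose d"
proof -
  define pad where "pad S = S + replicate_mset (d - size S) l" for S :: "nat multiset"
  have "inj_on pad (mono_idx l d)"
  proof (rule inj_onI, rule multiset_eqI)
    fix S1 S2 k
    assume "S1 \<in> mono_idx l d" "S2 \<in> mono_idx l d" "pad S1 = pad S2"
    then show "count S1 k = count S2 k"
    proof (cases "k < l")
      case True
      then have "count (pad S) k = count S k" for S
        by (simp add: pad_def)
      then show ?thesis
        using \<open>pad S1 = pad S2\<close> by metis
    next
      case False
      with \<open>S1 \<in> mono_idx l d\<close> \<open>S2 \<in> mono_idx l d\<close> show ?thesis
        unfolding mono_idx_def by (metis count_eq_zero_iff lessThan_iff mem_Collect_eq subsetD)
    qed
  qed
  moreover have "pad ` mono_idx l d \<subseteq> multisets_of_size {..<Suc l} d"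
    by (fastforce simp: pad_def mono_idx_def multisets_of_size_def)
  ultimately have "card (mono_idx l d) \<le> card (multisets_of_size {..<Suc l} d)"
    by (metis card_image card_mono finite_lessThan finite_multisets_of_size)
  then show ?thesis
    by (simp add: card_multisets_of_size)
qed

section \<open>The dual polynomial\<close>

lemma poly_f_eq_tensor_poly:
  "poly_f l d c = tensor_poly l (mono_idx l d) c (\<lambda>S i. monom 1 (count S i))"
  unfolding poly_f_def tensor_poly_def
  by (intro ext sum.cong refl) (simp add: chi_eq_prod_power mono_idx_def poly_monom)

text \<open>Exponent vectors are restricted to {..<l}, so that distinct vectors are distinct functions.\<close>

definition monomial_exponents :: "nat \<Rightarrow> nat \<Rightarrow> (nat \<Rightarrow> nat) set" where
  "monomial_exponents l d = (\<lambda>S. restrict (count S) {..<l}) ` mono_idx l d"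

lemma finite_monomial_exponents: "finite (monomial_exponents l d)"
  by (simp add: monomial_exponents_def finite_mono_idx)

lemma card_monomial_exponents_le: "card (monomial_exponents l d) \<le> card (mono_idx l d)"
  by (simp add: monomial_exponents_def card_image_le finite_mono_idx)

lemma monomial_exponentsD:
  assumes "e \<in> monomial_exponents l d"
  shows "e \<in> extensional {..<l}" and "(\<Sum>i<l. e i) \<le> d"
proof -
  from assms obtain S where S: "S \<in> mono_idx l d" and e: "e = restrict (count S) {..<l}"
    by (auto simp: monomial_exponents_def)
  show "e \<in> extensional {..<l}"
    by (simp add: e)
  have "(\<Sum>i<l. e i) = size S"
    using S by (simp add: e mono_idx_def size_eq_sum_count[of S l])
  then show "(\<Sum>i<l. e i) \<le> d"
    using S by (simp add: mono_idx_def)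
qed

lemma PiE_count_subset_monomial_exponents:
  assumes S: "S \<in> mono_idx l d"
  shows "PiE {..<l} (\<lambda>i. {..count S i}) \<subseteq> monomial_exponents l d"
proof
  fix e assume e: "e \<in> PiE {..<l} (\<lambda>i. {..count S i})"
  define R where "R = Abs_multiset (\<lambda>k. if k < l then e k else 0)"
  have "finite {k. 0 < (if k < l then e k else 0)}"
    by (rule finite_subset[of _ "{..<l}"]) (auto split: if_splits)
  then have count_R: "count R = (\<lambda>k. if k < l then e k else 0)"
    by (simp add: R_def)
  have set_R: "set_mset R \<subseteq> {..<l}"
    by (metis count_R count_eq_zero_iff lessThan_iff subsetI)
  have "size R = (\<Sum>i<l. e i)"
    using set_R by (simp add: size_eq_sum_count count_R)
  also have "\<dots> \<le> (\<Sum>i<l. count S i)"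
    using e by (intro sum_mono) (auto simp: PiE_iff)
  also have "\<dots> \<le> d"
    using S by (simp add: mono_idx_def size_eq_sum_count[of S l, symmetric])
  finally have "R \<in> mono_idx l d"
    using set_R by (simp add: mono_idx_def)
  moreover have "restrict (count R) {..<l} = e"
    using e by (auto simp: count_R PiE_iff extensional_def)
  ultimately show "e \<in> monomial_exponents l d"
    unfolding monomial_exponents_def by (metis image_eqI)
qed

definition dual_weight :: "nat \<Rightarrow> nat multiset \<Rightarrow> (nat \<Rightarrow> nat) \<Rightarrow> real" where
  "dual_weight l T e = (\<Prod>i<l. coeff (hermite (e i)) (count T i) / fact (e i))"

definition dual_poly :: "nat \<Rightarrow> nat \<Rightarrow> nat multiset \<Rightarrow> (nat \<Rightarrow> real) \<Rightarrow> real" where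
  "dual_poly l d T = tensor_poly l (monomial_exponents l d) (dual_weight l T) (\<lambda>e i. hermite (e i))"

lemma prod_count_eq_indicator:
  fixes S T :: "nat multiset"
  assumes "set_mset S \<subseteq> {..<l}" "set_mset T \<subseteq> {..<l}"
  shows "(\<Prod>i<l. if count S i = count T i then 1 else 0 :: real) = (if S = T then 1 else 0)"
proof (cases "S = T")
  case False
  then obtain k where k: "count S k \<noteq> count T k"
    by (meson multiset_eqI)
  then have "k < l"
    using assms by (metis count_eq_zero_iff lessThan_iff subsetD)
  then show ?thesis
    using k False by (intro trans[OF prod_zero]) auto
qed simp

lemma dual_pairing:
  assumes S: "S \<in> mono_idx l d" and T: "T \<in> mono_idx l d"
  shows "(\<Sum>e\<in>monomial_exponents l d.
            dual_weight l T e * (\<Prod>i<l. gauss_expect (monom 1 (count S i) * hermite (e i))))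
         = (if S = T then 1 else 0)"
proof -
  define g where
    "g i j = gauss_expect (monom 1 (count S i) * hermite j) / fact j * coeff (hermite j) (count T i)"
  for i j
  define B where "B = PiE {..<l} (\<lambda>i. {..count S i})"
  have "(\<Sum>e\<in>monomial_exponents l d.
            dual_weight l T e * (\<Prod>i<l. gauss_expect (monom 1 (count S i) * hermite (e i))))
        = (\<Sum>e\<in>monomial_exponents l d. \<Prod>i<l. g i (e i))"
    unfolding dual_weight_def g_def prod.distrib[symmetric] by (simp add: mult_ac)
  also have "\<dots> = (\<Sum>e\<in>B. \<Prod>i<l. g i (e i))"
  proof (rule sum.mono_neutral_right)
    show "B \<subseteq> monomial_exponents l d"
      unfolding B_def using S by (rule PiE_count_subset_monomial_exponents)
    show "\<forall>e\<in>monomial_exponents l d - B. (\<Prod>i<l. g i (e i)) = 0"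
    proof
      fix e assume e: "e \<in> monomial_exponents l d - B"
      then obtain i where "i < l" "count S i < e i"
        using monomial_exponentsD(1)[of e] by (force simp: B_def PiE_iff)
      then have "g i (e i) = 0"
        by (simp add: g_def gauss_expect_mult_hermite_eq_0 degree_monom_eq)
      with \<open>i < l\<close> show "(\<Prod>i<l. g i (e i)) = 0"
        by (intro prod_zero) auto
    qed
  qed (rule finite_monomial_exponents)
  also have "\<dots> = (\<Prod>i<l. \<Sum>j\<le>count S i. g i j)"
    unfolding B_def by (rule prod_sum_PiE[symmetric]) auto
  also have "\<dots> = (\<Prod>i<l. if count S i = count T i then 1 else 0)"
    unfolding g_def hermite_coeff_duality by (rule refl)
  also have "\<dots> = (if S = T then 1 else 0)"
    using S T by (intro prod_count_eq_indicator) (simp_all add: mono_idx_def)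
  finally show ?thesis .
qed

lemma integral_poly_f_mult_dual_poly:
  assumes "T \<in> mono_idx l d"
  shows "(\<integral>x. poly_f l d c x * dual_poly l d T x \<partial>gauss l) = c T"
proof -
  have "(\<integral>x. poly_f l d c x * dual_poly l d T x \<partial>gauss l)
      = (\<Sum>S\<in>mono_idx l d. c S * (\<Sum>e\<in>monomial_exponents l d.
            dual_weight l T e * (\<Prod>i<l. gauss_expect (monom 1 (count S i) * hermite (e i)))))"
    unfolding poly_f_eq_tensor_poly dual_poly_def integral_gauss_tensor_poly_mult
    by (simp add: sum_distrib_left mult.assoc)
  also have "\<dots> = (\<Sum>S\<in>mono_idx l d. c S * (if S = T then 1 else 0))"
    using assms by (intro sum.cong refl) (simp add: dual_pairing)
  also have "\<dots> = c T"
    using assms finite_mono_idx by (simp add: if_distrib sum.delta cong: if_cong)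
  finally show ?thesis .
qed

lemma prod_gauss_expect_hermite_mult_hermite:
  fixes e e' :: "nat \<Rightarrow> nat"
  assumes "e \<in> extensional {..<l}" "e' \<in> extensional {..<l}"
  shows "(\<Prod>i<l. gauss_expect (hermite (e i) * hermite (e' i)))
           = (if e = e' then \<Prod>i<l. fact (e i) else 0)"
proof (cases "e = e'")
  case False
  then obtain i where "i < l" "e i \<noteq> e' i"
    using assms extensionalityI[of e "{..<l}" e'] by auto
  then show ?thesis
    using False by (intro trans[OF prod_zero]) (auto simp: gauss_expect_hermite_mult_hermite)
qed (simp add: gauss_expect_hermite_mult_hermite)

lemma dual_weight_sq_mult_fact_le:
  "(dual_weight l T e)\<^sup>2 * (\<Prod>i<l. fact (e i)) \<le> 2 ^ (\<Sum>i<l. e i)"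
proof -
  have "(dual_weight l T e)\<^sup>2 * (\<Prod>i<l. fact (e i))
      = (\<Prod>i<l. (coeff (hermite (e i)) (count T i))\<^sup>2 / fact (e i))"
    unfolding dual_weight_def prod_power_distrib prod.distrib[symmetric]
    by (intro prod.cong refl) (simp add: power2_eq_square)
  also have "\<dots> \<le> (\<Prod>i<l. 2 ^ e i)"
    using hermite_coeff_sq_le by (intro prod_mono) (simp add: divide_le_eq)
  also have "\<dots> = 2 ^ (\<Sum>i<l. e i)"
    by (simp add: power_sum)
  finally show ?thesis .
qed

lemma integral_dual_poly_sq_le:
  "(\<integral>x. dual_poly l d T x * dual_poly l d T x \<partial>gauss l) \<le> 2 ^ d * card (mono_idx l d)"
proof -
  let ?E = "monomial_exponents l d"
  have "(\<integral>x. dual_poly l d T x * dual_poly l d T x \<partial>gauss l)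
      = (\<Sum>e\<in>?E. \<Sum>e'\<in>?E. dual_weight l T e * dual_weight l T e' *
            (if e = e' then \<Prod>i<l. fact (e i) else 0))"
    unfolding dual_poly_def integral_gauss_tensor_poly_mult
    by (intro sum.cong refl)
       (simp add: prod_gauss_expect_hermite_mult_hermite monomial_exponentsD)
  also have "\<dots> = (\<Sum>e\<in>?E. (dual_weight l T e)\<^sup>2 * (\<Prod>i<l. fact (e i)))"
    by (simp add: finite_monomial_exponents if_distrib sum.delta power2_eq_square cong: if_cong)
  also have "\<dots> \<le> (\<Sum>e\<in>?E. 2 ^ d)"
    using monomial_exponentsD(2)
    by (intro sum_mono order.trans[OF dual_weight_sq_mult_fact_le]) simp
  also have "\<dots> \<le> 2 ^ d * card (mono_idx l d)"
    using card_monomial_exponents_le by simp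
  finally show ?thesis .
qed

lemma two_pow_mult_binomial_le:
  assumes "l \<ge> 1" "d \<ge> 1"
  shows "2 ^ d * real ((l + d) choose d) \<le> (real d ^ d * real ((l + d) choose d))\<^sup>2"
proof -
  define C where "C = real ((l + d) choose d)"
  have "(l + d) choose d > 0"
    by (simp add: zero_less_binomial_iff)
  then have "C \<ge> 1"
    by (simp add: C_def Suc_le_eq)
  show ?thesis
  proof (cases "d = 1")
    case True
    then have "2 \<le> C"
      using assms(1) by (simp add: C_def)
    then have "2 * C \<le> C * C"
      by (intro mult_right_mono) simp_all
    then show ?thesis
      unfolding C_def[symmetric] using True by (simp add: power2_eq_square)
  next
    case False
    have "(2::real) ^ d \<le> real d ^ d"
      using False assms(2) by (intro power_mono) simp_all
    also have "\<dots> \<le> (real d ^ d)\<^sup>2"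
      using assms(2) by (simp add: power2_eq_square)
    finally have "2 ^ d * C \<le> (real d ^ d)\<^sup>2 * C\<^sup>2"
      using \<open>C \<ge> 1\<close> by (intro mult_mono) (simp_all add: power2_eq_square)
    then show ?thesis
      by (simp add: C_def power_mult_distrib)
  qed
qed

theorem mainTheorem5:
  fixes l d :: nat and c :: "nat multiset \<Rightarrow> real" and T :: "nat multiset"
  assumes "l \<ge> 1" and "d \<ge> 1" and "T \<in> mono_idx l d"
  shows "L2norm (gauss l) (poly_f l d c)
           \<ge> (1 / real d ^ d) * \<bar>c T\<bar> / real ((l + d) choose d)"
proof -
  let ?f = "poly_f l d c" and ?q = "dual_poly l d T" and ?C = "real ((l + d) choose d)"
  define A where "A = (\<integral>x. ?f x * ?f x \<partial>gauss l)"
  have "A \<ge> 0"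
    unfolding A_def by (rule integral_nonneg_AE) simp
  have integrable:
    "integrable (gauss l) (\<lambda>x. ?f x * ?f x)" "integrable (gauss l) (\<lambda>x. ?q x * ?q x)"
    "integrable (gauss l) (\<lambda>x. ?f x * ?q x)"
    unfolding poly_f_eq_tensor_poly dual_poly_def by (rule integrable_gauss_tensor_poly_mult)+
  have "(c T)\<^sup>2 \<le> A * (\<integral>x. ?q x * ?q x \<partial>gauss l)"
    using integral_mult_square_le[OF integrable] integral_poly_f_mult_dual_poly[OF assms(3)]
    by (simp add: A_def)
  also have "\<dots> \<le> A * (2 ^ d * ?C)"
    using integral_dual_poly_sq_le[of l d T] card_mono_idx_le[of l d] \<open>A \<ge> 0\<close>
    by (intro mult_left_mono) (simp_all add: order.trans)
  also have "\<dots> \<le> A * (real d ^ d * ?C)\<^sup>2"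
    using two_pow_mult_binomial_le[OF assms(1,2)] \<open>A \<ge> 0\<close> by (rule mult_left_mono)
  finally have "sqrt ((c T)\<^sup>2) \<le> sqrt (A * (real d ^ d * ?C)\<^sup>2)"
    by (rule real_sqrt_le_mono)
  then have "\<bar>c T\<bar> \<le> sqrt A * (real d ^ d * ?C)"
    by (simp add: real_sqrt_mult)
  moreover have "L2norm (gauss l) ?f = sqrt A"
    by (simp add: L2norm_def A_def power2_eq_square)
  moreover have "real d ^ d > 0" "?C > 0"
    using assms(2) by (simp_all add: zero_less_binomial_iff)
  ultimately show ?thesis
    by (simp add: field_simps)
qed

end
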